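(* Let $\Gamma$ be a NoEff typing context, $\mathit{t},\mathit{t}'$ NoEff terms and $A$ a NoEff type. If $\Gamma \vdash \mathit{t} : A$ and $\mathit{t} \leadsto \mathit{t}'$, then $\Gamma \vdash \mathit{t}' : A$.
   Context: NoEff. Fix a signature $\Sigma$ assigning to each operation $\mathtt{Op}$ two closed well-formed NoEff types, $(\mathtt{Op}:A_1\to A_2)\in\Sigma$. Types $A,B ::= \alpha\mid\mathtt{Unit}\mid A\to B\mid A\Rrightarrow B\mid\mu\Rightarrow A\mid\mathtt{Comp}\,A\mid\forall\alpha.A$; coercion types $\mu ::= A\le B$. Coercions $\gamma ::= \omega\mid\langle\mathtt{Unit}\rangle\mid\langle\alpha\rangle\mid\gamma_1\to\gamma_2\mid\gamma_1\Rrightarrow\gamma_2\mid\mathtt{handToFun}(\gamma_1,\gamma_2)\mid\mathtt{funToHand}(\gamma_1,\gamma_2)\mid\forall\alpha.\gamma\mid\mu\Rightarrow\gamma\mid\mathtt{Comp}\,\gamma\mid\mathtt{return}\,\gamma\mid\mathtt{unsafe}\,\gamma$. Terms $\mathit{t} ::= x\mid\mathtt{unit}\mid\lambda(x{:}A).\mathit{t}\mid\mathit{t}_1\,\mathit{t}_2\mid\Lambda\alpha.\mathit{t}\mid\mathit{t}\,A\mid\Lambda(\omega{:}\mu).\mathit{t}\mid\mathit{t}\,\gamma\mid\mathit{t}\triangleright\gamma\mid\mathtt{return}\,\mathit{t}\mid h\mid\mathtt{let}\,x=\mathit{t}_1\,\mathtt{in}\,\mathit{t}_2\mid\mathtt{Op}\,\mathit{t}_1\,(y{:}B.\mathit{t}_2)\mid\mathtt{do}\,x\leftarrow\mathit{t}_1;\mathit{t}_2\mid\mathtt{with}\,\mathit{t}_h\,\mathtt{handle}\,\mathit{t}_c$;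 handlers $h ::= \{\mathtt{return}\,(x{:}A)\mapsto\mathit{t}_r,\mathtt{Op}_1\,x\,k\mapsto\mathit{t}_{\mathtt{Op}_1},\dots,\mathtt{Op}_n\,x\,k\mapsto\mathit{t}_{\mathtt{Op}_n}\}$ (distinct $\mathtt{Op}_i$, $\mathcal{O}=\{\mathtt{Op}_i\}$). Contexts $\Gamma ::= \epsilon\mid\Gamma,\alpha\mid\Gamma,x{:}A\mid\Gamma,\omega{:}\mu$; terms up to $\alpha$-equivalence, capture-avoiding substitution. Well-formedness: $\Gamma\vdash\alpha$ if $\alpha\in\Gamma$; $\Gamma\vdash\mathtt{Unit}$; $\Gamma\vdash A\to B$, $\Gamma\vdash A\Rrightarrow B$ if $\Gamma\vdash A$ and $\Gamma\vdash B$; $\Gamma\vdash\mathtt{Comp}\,A$ if $\Gamma\vdash A$; $\Gamma\vdash\forall\alpha.A$ if $\Gamma,\alpha\vdash A$; $\Gamma\vdash\mu\Rightarrow A$ if $\Gamma\vdash\mu$ and $\Gamma\vdash A$; $\Gamma\vdash A\le B$ if $\Gamma\vdash A$ and $\Gamma\vdash B$. Coercion typing $\Gamma\vdash\gamma:\mu$: $\omega:\mu$ if $(\omega{:}\mu)\in\Gamma$; $\langle\mathtt{Unit}\rangle:\mathtt{Unit}\le\mathtt{Unit}$; $\langle\alpha\rangle:\alpha\le\alpha$ if $\alpha\in\Gamma$; $\gamma_1\to\gamma_2:(A_1\to B_1)\le(A_2\to B_2)$ if $\gamma_1:A_2\le A_1$, $\gamma_2:B_1\le B_2$; $\gamma_1\Rrightarrow\gamma_2:(A_1\Rrightarrow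 B_1)\le(A_2\Rrightarrow B_2)$ if $\gamma_1:\mathtt{Comp}\,A_2\le\mathtt{Comp}\,A_1$, $\gamma_2:\mathtt{Comp}\,B_1\le\mathtt{Comp}\,B_2$; $\mathtt{handToFun}(\gamma_1,\gamma_2):(A_1\Rrightarrow B_1)\le(A_2\to B_2)$ if $\gamma_1:A_2\le A_1$, $\gamma_2:\mathtt{Comp}\,B_1\le B_2$; $\mathtt{funToHand}(\gamma_1,\gamma_2):(A_1\to B_1)\le(A_2\Rrightarrow B_2)$ if $\gamma_1:A_2\le A_1$, $\gamma_2:B_1\le\mathtt{Comp}\,B_2$; $\forall\alpha.\gamma:\forall\alpha.A\le\forall\alpha.B$ if $\Gamma,\alpha\vdash\gamma:A\le B$; $\mu\Rightarrow\gamma:(\mu\Rightarrow A)\le(\mu\Rightarrow B)$ if $\Gamma\vdash\mu$, $\gamma:A\le B$; $\mathtt{Comp}\,\gamma:\mathtt{Comp}\,A_1\le\mathtt{Comp}\,A_2$ if $\gamma:A_1\le A_2$; $\mathtt{return}\,\gamma:A_1\le\mathtt{Comp}\,A_2$ if $\gamma:A_1\le A_2$; $\mathtt{unsafe}\,\gamma:\mathtt{Comp}\,A_1\le A_2$ if $\gamma:A_1\le A_2$. Term typing $\Gamma\vdash\mathit{t}:A$: $x:A$ if $(x{:}A)\in\Gamma$; $\mathtt{unit}:\mathtt{Unit}$; $\lambda(x{:}A).\mathit{t}:A\to B$ if $\Gamma\vdash A$ and $\Gamma,x{:}A\vdash\mathit{t}:B$; $\Lambda\alpha.\mathit{t}:\forall\alpha.A$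 if $\Gamma,\alpha\vdash\mathit{t}:A$; $\mathit{t}\,A:B[A/\alpha]$ if $\Gamma\vdash A$ and $\mathit{t}:\forall\alpha.B$; $\mathit{t}\triangleright\gamma:B$ if $\mathit{t}:A$ and $\gamma:A\le B$; $h:A\Rrightarrow B$ if $\Gamma,x{:}A\vdash\mathit{t}_r:\mathtt{Comp}\,B$ and for each $\mathtt{Op}\in\mathcal{O}$, $(\mathtt{Op}:A_1\to A_2)\in\Sigma$ and $\Gamma,x{:}A_1,k{:}A_2\to\mathtt{Comp}\,B\vdash\mathit{t}_{\mathtt{Op}}:\mathtt{Comp}\,B$; $\Lambda(\omega{:}\mu).\mathit{t}:\mu\Rightarrow A$ if $\Gamma\vdash\mu$ and $\Gamma,\omega{:}\mu\vdash\mathit{t}:A$; $\mathit{t}\,\gamma:A$ if $\mathit{t}:\mu\Rightarrow A$, $\gamma:\mu$; $\mathit{t}_1\,\mathit{t}_2:B$ if $\mathit{t}_1:A\to B$, $\mathit{t}_2:A$; $\mathtt{let}\,x=\mathit{t}_1\,\mathtt{in}\,\mathit{t}_2:B$ if $\mathit{t}_1:A$, $\Gamma,x{:}A\vdash\mathit{t}_2:B$; $\mathtt{return}\,\mathit{t}:\mathtt{Comp}\,A$ if $\mathit{t}:A$; $\mathtt{Op}\,\mathit{t}_1\,(y{:}A_2.\mathit{t}_2):\mathtt{Comp}\,B$ if $(\mathtt{Op}:A_1\to A_2)\in\Sigma$, $\mathit{t}_1:A_1$, $\Gamma,y{:}A_2\vdash\mathit{t}_2:\mathtt{Comp}\,B$;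 $\mathtt{do}\,x\leftarrow\mathit{t}_1;\mathit{t}_2:\mathtt{Comp}\,B$ if $\mathit{t}_1:\mathtt{Comp}\,A$, $\Gamma,x{:}A\vdash\mathit{t}_2:\mathtt{Comp}\,B$; $\mathtt{with}\,\mathit{t}_h\,\mathtt{handle}\,\mathit{t}_c:\mathtt{Comp}\,B$ if $\mathit{t}_h:A\Rrightarrow B$, $\mathit{t}_c:\mathtt{Comp}\,A$. Values $\mathit{t}^R ::= \mathtt{unit}\mid h\mid\lambda(x{:}A).\mathit{t}\mid\Lambda\alpha.\mathit{t}\mid\Lambda(\omega{:}\mu).\mathit{t}\mid\mathit{t}^R\triangleright(\gamma_1\to\gamma_2)\mid\mathit{t}^R\triangleright(\gamma_1\Rrightarrow\gamma_2)\mid\mathit{t}^R\triangleright\mathtt{handToFun}(\gamma_1,\gamma_2)\mid\mathit{t}^R\triangleright\mathtt{funToHand}(\gamma_1,\gamma_2)\mid\mathit{t}^R\triangleright\forall\alpha.\gamma\mid\mathit{t}^R\triangleright(\mu\Rightarrow\gamma)\mid\mathtt{return}\,\mathit{t}^R\mid\mathtt{Op}\,\mathit{t}^R\,(y{:}A.\mathit{t})$. Step relation $\mathit{t}\leadsto\mathit{t}'$: congruences — if $\mathit{t}\leadsto\mathit{t}'$ then it steps in the positions $\square\,\mathit{t}_2$, $\mathit{t}^R\,\square$, $\square\,A$, $\square\,\gamma$, $\mathtt{let}\,x=\square\,\mathtt{in}\,\mathit{t}_2$, $\mathtt{return}\,\square$, $\mathtt{Op}\,\square\,(y{:}B.\mathit{t}_2)$,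 $\mathtt{do}\,x\leftarrow\square;\mathit{t}_2$, $\mathtt{with}\,\square\,\mathtt{handle}\,\mathit{t}_c$, $\mathtt{with}\,\mathit{t}^R_h\,\mathtt{handle}\,\square$, $\square\triangleright\gamma$. Reductions: $(\lambda(x{:}A).\mathit{t})\,\mathit{t}^R\leadsto\mathit{t}[\mathit{t}^R/x]$; $(\Lambda\alpha.\mathit{t})\,A\leadsto\mathit{t}[A/\alpha]$; $(\Lambda(\omega{:}\mu).\mathit{t})\,\gamma\leadsto\mathit{t}[\gamma/\omega]$; $\mathtt{let}\,x=\mathit{t}^R\,\mathtt{in}\,\mathit{t}\leadsto\mathit{t}[\mathit{t}^R/x]$; $\mathtt{do}\,x\leftarrow\mathtt{return}\,\mathit{t}^R;\mathit{t}\leadsto\mathit{t}[\mathit{t}^R/x]$; $\mathtt{do}\,x\leftarrow\mathtt{Op}\,\mathit{t}^R\,(y{:}A.\mathit{t}_1);\mathit{t}_2\leadsto\mathtt{Op}\,\mathit{t}^R\,(y{:}A.\,\mathtt{do}\,x\leftarrow\mathit{t}_1;\mathit{t}_2)$; $\mathtt{with}\,h\,\mathtt{handle}\,(\mathtt{return}\,\mathit{t}^R)\leadsto\mathit{t}_r[\mathit{t}^R/x]$; $\mathtt{with}\,h\,\mathtt{handle}\,(\mathtt{Op}\,\mathit{t}^R\,(y{:}B.\mathit{t}))\leadsto\mathit{t}_{\mathtt{Op}}[\mathit{t}^R/x,(\lambda(y{:}B).\mathtt{with}\,h\,\mathtt{handle}\,\mathit{t})/k]$ if $h$ has clause $\mathtt{Op}\,x\,k\mapsto\mathit{t}_{\mathtt{Op}}$,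 else $\leadsto\mathtt{Op}\,\mathit{t}^R\,(y{:}B.\,\mathtt{with}\,h\,\mathtt{handle}\,\mathit{t})$; $\mathit{t}^R\triangleright\langle\mathtt{Unit}\rangle\leadsto\mathit{t}^R$; $(\mathtt{return}\,\mathit{t}^R)\triangleright\mathtt{Comp}\,\gamma\leadsto\mathtt{return}\,(\mathit{t}^R\triangleright\gamma)$; $(\mathtt{Op}\,\mathit{t}^R\,(y{:}B.\mathit{t}))\triangleright\mathtt{Comp}\,\gamma\leadsto\mathtt{Op}\,\mathit{t}^R\,(y{:}B.\,\mathit{t}\triangleright\mathtt{Comp}\,\gamma)$; $\mathit{t}^R\triangleright\mathtt{return}\,\gamma\leadsto\mathtt{return}\,(\mathit{t}^R\triangleright\gamma)$; $(\mathtt{return}\,\mathit{t}^R)\triangleright\mathtt{unsafe}\,\gamma\leadsto\mathit{t}^R\triangleright\gamma$; $(\mathit{t}^R\triangleright(\gamma_1\to\gamma_2))\,\mathit{t}\leadsto(\mathit{t}^R\,(\mathit{t}\triangleright\gamma_1))\triangleright\gamma_2$; $\mathtt{with}\,(\mathit{t}^R_2\triangleright(\gamma_1\Rrightarrow\gamma_2))\,\mathtt{handle}\,\mathit{t}^R_1\leadsto(\mathtt{with}\,\mathit{t}^R_2\,\mathtt{handle}\,(\mathit{t}^R_1\triangleright\gamma_1))\triangleright\gamma_2$; $(\mathit{t}^R_1\triangleright\mathtt{handToFun}(\gamma_1,\gamma_2))\,\mathit{t}^R_2\leadsto(\mathtt{with}\,\mathit{t}^R_1\,\mathtt{handle}\,(\mathtt{return}\,(\mathit{t}^R_2\triangleright\gamma_1)))\triangleright\gamma_2$;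 $\mathtt{with}\,(\mathit{t}^R_2\triangleright\mathtt{funToHand}(\gamma_1,\gamma_2))\,\mathtt{handle}\,(\mathtt{Op}\,\mathit{t}^R_1\,(y{:}B.\mathit{t}))\leadsto\mathtt{Op}\,\mathit{t}^R_1\,(y{:}B.\,\mathtt{with}\,(\mathit{t}^R_2\triangleright\mathtt{funToHand}(\gamma_1,\gamma_2))\,\mathtt{handle}\,\mathit{t})$; $\mathtt{with}\,(\mathit{t}^R_2\triangleright\mathtt{funToHand}(\gamma_1,\gamma_2))\,\mathtt{handle}\,(\mathtt{return}\,\mathit{t}^R_1)\leadsto(\mathit{t}^R_2\,(\mathit{t}^R_1\triangleright\gamma_1))\triangleright\gamma_2$; $(\mathit{t}^R\triangleright\forall\alpha.\gamma)\,A\leadsto(\mathit{t}^R\,A)\triangleright\gamma[A/\alpha]$; $(\mathit{t}^R\triangleright(\mu\Rightarrow\gamma_1))\,\gamma_2\leadsto(\mathit{t}^R\,\gamma_2)\triangleright\gamma_1$. *)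

theory Defs
  imports Main
begin

section \<open>NoEff syntax (locally de Bruijn: three separate index namespaces)\<close>

text \<open>Type variables, term variables and coercion variables are represented by
de Bruijn indices, each sort counting only the binders/context entries of its own
sort.\<close>

datatype ty =
    TVar nat
  | TUnit
  | TFun ty ty
  | THand ty ty
  | TCoArr cty ty
  | TComp ty
  | TAll ty             (* forall alpha. A ; binds type index 0 *)
and cty = CLe ty ty

datatype co =
    CVar nat
  | CReflUnit
  | CReflVar nat
  | CFun co co
  | CHand co co
  | CHandToFun co co
  | CFunToHand co co
  | CAll co             (* binds type index 0 *)
  | CCoArr cty co
  | CComp co
  | CReturn co
  | CUnsafe co

datatype 'op tm =
    TmVar nat
  | TmUnit
  | TmLam ty "'op tm"                       (* \<lambda>(x:A). t, binds term index 0 *)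
  | TmApp "'op tm" "'op tm"
  | TmTLam "'op tm"
  | TmTApp "'op tm" ty
  | TmCLam cty "'op tm"
  | TmCApp "'op tm" co
  | TmCast "'op tm" co
  | TmRet "'op tm"
  | TmHd ty "'op tm" "('op \<times> 'op tm) list"
      (* {return (x:A) \<mapsto> t_r, Op_i x k \<mapsto> t_Op_i}; t_r binds x (index 0),
         t_Op binds x and k (k = index 0, x = index 1) *)
  | TmLet "'op tm" "'op tm"
  | TmOp 'op "'op tm" ty "'op tm"           (* Op t1 (y:B. t2) *)
  | TmDo "'op tm" "'op tm"
  | TmWith "'op tm" "'op tm"

datatype entry = EType | ETerm ty | ECo cty

type_synonym ctx = "entry list"   (* head = most recently added entry *)

section \<open>Shifting and substitution\<close>

fun shift_ty :: "nat \<Rightarrow> nat \<Rightarrow> ty \<Rightarrow> ty"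
and shift_cty :: "nat \<Rightarrow> nat \<Rightarrow> cty \<Rightarrow> cty" where
  "shift_ty d c (TVar n) = TVar (if n < c then n else n + d)"
| "shift_ty d c TUnit = TUnit"
| "shift_ty d c (TFun A B) = TFun (shift_ty d c A) (shift_ty d c B)"
| "shift_ty d c (THand A B) = THand (shift_ty d c A) (shift_ty d c B)"
| "shift_ty d c (TCoArr m A) = TCoArr (shift_cty d c m) (shift_ty d c A)"
| "shift_ty d c (TComp A) = TComp (shift_ty d c A)"
| "shift_ty d c (TAll A) = TAll (shift_ty d (Suc c) A)"
| "shift_cty d c (CLe A B) = CLe (shift_ty d c A) (shift_ty d c B)"

text \<open>\<open>tsubst_ty k B A\<close> = A[B/k] (B already lives in the context below the binder).\<close>
fun tsubst_ty :: "nat \<Rightarrow> ty \<Rightarrow> ty \<Rightarrow> ty"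
and tsubst_cty :: "nat \<Rightarrow> ty \<Rightarrow> cty \<Rightarrow> cty" where
  "tsubst_ty k B (TVar n) = (if n < k then TVar n else if n = k then B else TVar (n - 1))"
| "tsubst_ty k B TUnit = TUnit"
| "tsubst_ty k B (TFun A1 A2) = TFun (tsubst_ty k B A1) (tsubst_ty k B A2)"
| "tsubst_ty k B (THand A1 A2) = THand (tsubst_ty k B A1) (tsubst_ty k B A2)"
| "tsubst_ty k B (TCoArr m A) = TCoArr (tsubst_cty k B m) (tsubst_ty k B A)"
| "tsubst_ty k B (TComp A) = TComp (tsubst_ty k B A)"
| "tsubst_ty k B (TAll A) = TAll (tsubst_ty (Suc k) (shift_ty 1 0 B) A)"
| "tsubst_cty k B (CLe A1 A2) = CLe (tsubst_ty k B A1) (tsubst_ty k B A2)"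

text \<open>Reflexivity coercion \<open>\<langle>A\<rangle>\<close> for an arbitrary type (needed as the image of
\<open>\<langle>alpha\<rangle>\<close> under type substitution).\<close>
fun refl_co :: "ty \<Rightarrow> co" where
  "refl_co (TVar n) = CReflVar n"
| "refl_co TUnit = CReflUnit"
| "refl_co (TFun A B) = CFun (refl_co A) (refl_co B)"
| "refl_co (THand A B) = CHand (CComp (refl_co A)) (CComp (refl_co B))"
| "refl_co (TCoArr m A) = CCoArr m (refl_co A)"
| "refl_co (TComp A) = CComp (refl_co A)"
| "refl_co (TAll A) = CAll (refl_co A)"

fun shift_co_ty :: "nat \<Rightarrow> nat \<Rightarrow> co \<Rightarrow> co" where
  "shift_co_ty d c (CVar n) = CVar n"
| "shift_co_ty d c CReflUnit = CReflUnit"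
| "shift_co_ty d c (CReflVar n) = CReflVar (if n < c then n else n + d)"
| "shift_co_ty d c (CFun g1 g2) = CFun (shift_co_ty d c g1) (shift_co_ty d c g2)"
| "shift_co_ty d c (CHand g1 g2) = CHand (shift_co_ty d c g1) (shift_co_ty d c g2)"
| "shift_co_ty d c (CHandToFun g1 g2) = CHandToFun (shift_co_ty d c g1) (shift_co_ty d c g2)"
| "shift_co_ty d c (CFunToHand g1 g2) = CFunToHand (shift_co_ty d c g1) (shift_co_ty d c g2)"
| "shift_co_ty d c (CAll g) = CAll (shift_co_ty d (Suc c) g)"
| "shift_co_ty d c (CCoArr m g) = CCoArr (shift_cty d c m) (shift_co_ty d c g)"
| "shift_co_ty d c (CComp g) = CComp (shift_co_ty d c g)"
| "shift_co_ty d c (CReturn g) = CReturn (shift_co_ty d c g)"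
| "shift_co_ty d c (CUnsafe g) = CUnsafe (shift_co_ty d c g)"

fun tsubst_co :: "nat \<Rightarrow> ty \<Rightarrow> co \<Rightarrow> co" where
  "tsubst_co k B (CVar n) = CVar n"
| "tsubst_co k B CReflUnit = CReflUnit"
| "tsubst_co k B (CReflVar n) =
     (if n < k then CReflVar n else if n = k then refl_co B else CReflVar (n - 1))"
| "tsubst_co k B (CFun g1 g2) = CFun (tsubst_co k B g1) (tsubst_co k B g2)"
| "tsubst_co k B (CHand g1 g2) = CHand (tsubst_co k B g1) (tsubst_co k B g2)"
| "tsubst_co k B (CHandToFun g1 g2) = CHandToFun (tsubst_co k B g1) (tsubst_co k B g2)"
| "tsubst_co k B (CFunToHand g1 g2) = CFunToHand (tsubst_co k B g1) (tsubst_co k B g2)"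
| "tsubst_co k B (CAll g) = CAll (tsubst_co (Suc k) (shift_ty 1 0 B) g)"
| "tsubst_co k B (CCoArr m g) = CCoArr (tsubst_cty k B m) (tsubst_co k B g)"
| "tsubst_co k B (CComp g) = CComp (tsubst_co k B g)"
| "tsubst_co k B (CReturn g) = CReturn (tsubst_co k B g)"
| "tsubst_co k B (CUnsafe g) = CUnsafe (tsubst_co k B g)"

fun shift_co_co :: "nat \<Rightarrow> nat \<Rightarrow> co \<Rightarrow> co" where
  "shift_co_co d c (CVar n) = CVar (if n < c then n else n + d)"
| "shift_co_co d c CReflUnit = CReflUnit"
| "shift_co_co d c (CReflVar n) = CReflVar n"
| "shift_co_co d c (CFun g1 g2) = CFun (shift_co_co d c g1) (shift_co_co d c g2)"
| "shift_co_co d c (CHand g1 g2) = CHand (shift_co_co d c g1) (shift_co_co d c g2)"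
| "shift_co_co d c (CHandToFun g1 g2) = CHandToFun (shift_co_co d c g1) (shift_co_co d c g2)"
| "shift_co_co d c (CFunToHand g1 g2) = CFunToHand (shift_co_co d c g1) (shift_co_co d c g2)"
| "shift_co_co d c (CAll g) = CAll (shift_co_co d c g)"
| "shift_co_co d c (CCoArr m g) = CCoArr m (shift_co_co d c g)"
| "shift_co_co d c (CComp g) = CComp (shift_co_co d c g)"
| "shift_co_co d c (CReturn g) = CReturn (shift_co_co d c g)"
| "shift_co_co d c (CUnsafe g) = CUnsafe (shift_co_co d c g)"

fun csubst_co :: "nat \<Rightarrow> co \<Rightarrow> co \<Rightarrow> co" where
  "csubst_co k e (CVar n) = (if n < k then CVar n else if n = k then e else CVar (n - 1))"
| "csubst_co k e CReflUnit = CReflUnit"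
| "csubst_co k e (CReflVar n) = CReflVar n"
| "csubst_co k e (CFun g1 g2) = CFun (csubst_co k e g1) (csubst_co k e g2)"
| "csubst_co k e (CHand g1 g2) = CHand (csubst_co k e g1) (csubst_co k e g2)"
| "csubst_co k e (CHandToFun g1 g2) = CHandToFun (csubst_co k e g1) (csubst_co k e g2)"
| "csubst_co k e (CFunToHand g1 g2) = CFunToHand (csubst_co k e g1) (csubst_co k e g2)"
| "csubst_co k e (CAll g) = CAll (csubst_co k (shift_co_ty 1 0 e) g)"
| "csubst_co k e (CCoArr m g) = CCoArr m (csubst_co k e g)"
| "csubst_co k e (CComp g) = CComp (csubst_co k e g)"
| "csubst_co k e (CReturn g) = CReturn (csubst_co k e g)"
| "csubst_co k e (CUnsafe g) = CUnsafe (csubst_co k e g)"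

fun shift_tm :: "nat \<Rightarrow> nat \<Rightarrow> 'op tm \<Rightarrow> 'op tm" where
  "shift_tm d c (TmVar n) = TmVar (if n < c then n else n + d)"
| "shift_tm d c TmUnit = TmUnit"
| "shift_tm d c (TmLam A t) = TmLam A (shift_tm d (Suc c) t)"
| "shift_tm d c (TmApp t1 t2) = TmApp (shift_tm d c t1) (shift_tm d c t2)"
| "shift_tm d c (TmTLam t) = TmTLam (shift_tm d c t)"
| "shift_tm d c (TmTApp t A) = TmTApp (shift_tm d c t) A"
| "shift_tm d c (TmCLam m t) = TmCLam m (shift_tm d c t)"
| "shift_tm d c (TmCApp t g) = TmCApp (shift_tm d c t) g"
| "shift_tm d c (TmCast t g) = TmCast (shift_tm d c t) g"
| "shift_tm d c (TmRet t) = TmRet (shift_tm d c t)"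
| "shift_tm d c (TmHd A tr cls) =
     TmHd A (shift_tm d (Suc c) tr) (map (\<lambda>(nm, t). (nm, shift_tm d (c + 2) t)) cls)"
| "shift_tm d c (TmLet t1 t2) = TmLet (shift_tm d c t1) (shift_tm d (Suc c) t2)"
| "shift_tm d c (TmOp nm t1 B t2) = TmOp nm (shift_tm d c t1) B (shift_tm d (Suc c) t2)"
| "shift_tm d c (TmDo t1 t2) = TmDo (shift_tm d c t1) (shift_tm d (Suc c) t2)"
| "shift_tm d c (TmWith t1 t2) = TmWith (shift_tm d c t1) (shift_tm d c t2)"

fun shift_tm_ty :: "nat \<Rightarrow> nat \<Rightarrow> 'op tm \<Rightarrow> 'op tm" where
  "shift_tm_ty d c (TmVar n) = TmVar n"
| "shift_tm_ty d c TmUnit = TmUnit"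
| "shift_tm_ty d c (TmLam A t) = TmLam (shift_ty d c A) (shift_tm_ty d c t)"
| "shift_tm_ty d c (TmApp t1 t2) = TmApp (shift_tm_ty d c t1) (shift_tm_ty d c t2)"
| "shift_tm_ty d c (TmTLam t) = TmTLam (shift_tm_ty d (Suc c) t)"
| "shift_tm_ty d c (TmTApp t A) = TmTApp (shift_tm_ty d c t) (shift_ty d c A)"
| "shift_tm_ty d c (TmCLam m t) = TmCLam (shift_cty d c m) (shift_tm_ty d c t)"
| "shift_tm_ty d c (TmCApp t g) = TmCApp (shift_tm_ty d c t) (shift_co_ty d c g)"
| "shift_tm_ty d c (TmCast t g) = TmCast (shift_tm_ty d c t) (shift_co_ty d c g)"
| "shift_tm_ty d c (TmRet t) = TmRet (shift_tm_ty d c t)"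
| "shift_tm_ty d c (TmHd A tr cls) =
     TmHd (shift_ty d c A) (shift_tm_ty d c tr) (map (\<lambda>(nm, t). (nm, shift_tm_ty d c t)) cls)"
| "shift_tm_ty d c (TmLet t1 t2) = TmLet (shift_tm_ty d c t1) (shift_tm_ty d c t2)"
| "shift_tm_ty d c (TmOp nm t1 B t2) = TmOp nm (shift_tm_ty d c t1) (shift_ty d c B) (shift_tm_ty d c t2)"
| "shift_tm_ty d c (TmDo t1 t2) = TmDo (shift_tm_ty d c t1) (shift_tm_ty d c t2)"
| "shift_tm_ty d c (TmWith t1 t2) = TmWith (shift_tm_ty d c t1) (shift_tm_ty d c t2)"

fun shift_tm_co :: "nat \<Rightarrow> nat \<Rightarrow> 'op tm \<Rightarrow> 'op tm" where
  "shift_tm_co d c (TmVar n) = TmVar n"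
| "shift_tm_co d c TmUnit = TmUnit"
| "shift_tm_co d c (TmLam A t) = TmLam A (shift_tm_co d c t)"
| "shift_tm_co d c (TmApp t1 t2) = TmApp (shift_tm_co d c t1) (shift_tm_co d c t2)"
| "shift_tm_co d c (TmTLam t) = TmTLam (shift_tm_co d c t)"
| "shift_tm_co d c (TmTApp t A) = TmTApp (shift_tm_co d c t) A"
| "shift_tm_co d c (TmCLam m t) = TmCLam m (shift_tm_co d (Suc c) t)"
| "shift_tm_co d c (TmCApp t g) = TmCApp (shift_tm_co d c t) (shift_co_co d c g)"
| "shift_tm_co d c (TmCast t g) = TmCast (shift_tm_co d c t) (shift_co_co d c g)"
| "shift_tm_co d c (TmRet t) = TmRet (shift_tm_co d c t)"
| "shift_tm_co d c (TmHd A tr cls) =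
     TmHd A (shift_tm_co d c tr) (map (\<lambda>(nm, t). (nm, shift_tm_co d c t)) cls)"
| "shift_tm_co d c (TmLet t1 t2) = TmLet (shift_tm_co d c t1) (shift_tm_co d c t2)"
| "shift_tm_co d c (TmOp nm t1 B t2) = TmOp nm (shift_tm_co d c t1) B (shift_tm_co d c t2)"
| "shift_tm_co d c (TmDo t1 t2) = TmDo (shift_tm_co d c t1) (shift_tm_co d c t2)"
| "shift_tm_co d c (TmWith t1 t2) = TmWith (shift_tm_co d c t1) (shift_tm_co d c t2)"

fun subst_tm :: "nat \<Rightarrow> 'op tm \<Rightarrow> 'op tm \<Rightarrow> 'op tm" where
  "subst_tm k v (TmVar n) = (if n < k then TmVar n else if n = k then v else TmVar (n - 1))"
| "subst_tm k v TmUnit = TmUnit"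
| "subst_tm k v (TmLam A t) = TmLam A (subst_tm (Suc k) (shift_tm 1 0 v) t)"
| "subst_tm k v (TmApp t1 t2) = TmApp (subst_tm k v t1) (subst_tm k v t2)"
| "subst_tm k v (TmTLam t) = TmTLam (subst_tm k (shift_tm_ty 1 0 v) t)"
| "subst_tm k v (TmTApp t A) = TmTApp (subst_tm k v t) A"
| "subst_tm k v (TmCLam m t) = TmCLam m (subst_tm k (shift_tm_co 1 0 v) t)"
| "subst_tm k v (TmCApp t g) = TmCApp (subst_tm k v t) g"
| "subst_tm k v (TmCast t g) = TmCast (subst_tm k v t) g"
| "subst_tm k v (TmRet t) = TmRet (subst_tm k v t)"
| "subst_tm k v (TmHd A tr cls) =
     TmHd A (subst_tm (Suc k) (shift_tm 1 0 v) tr)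
        (map (\<lambda>(nm, t). (nm, subst_tm (k + 2) (shift_tm 2 0 v) t)) cls)"
| "subst_tm k v (TmLet t1 t2) = TmLet (subst_tm k v t1) (subst_tm (Suc k) (shift_tm 1 0 v) t2)"
| "subst_tm k v (TmOp nm t1 B t2) =
     TmOp nm (subst_tm k v t1) B (subst_tm (Suc k) (shift_tm 1 0 v) t2)"
| "subst_tm k v (TmDo t1 t2) = TmDo (subst_tm k v t1) (subst_tm (Suc k) (shift_tm 1 0 v) t2)"
| "subst_tm k v (TmWith t1 t2) = TmWith (subst_tm k v t1) (subst_tm k v t2)"

fun tsubst_tm :: "nat \<Rightarrow> ty \<Rightarrow> 'op tm \<Rightarrow> 'op tm" where
  "tsubst_tm k B (TmVar n) = TmVar n"
| "tsubst_tm k B TmUnit = TmUnit"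
| "tsubst_tm k B (TmLam A t) = TmLam (tsubst_ty k B A) (tsubst_tm k B t)"
| "tsubst_tm k B (TmApp t1 t2) = TmApp (tsubst_tm k B t1) (tsubst_tm k B t2)"
| "tsubst_tm k B (TmTLam t) = TmTLam (tsubst_tm (Suc k) (shift_ty 1 0 B) t)"
| "tsubst_tm k B (TmTApp t A) = TmTApp (tsubst_tm k B t) (tsubst_ty k B A)"
| "tsubst_tm k B (TmCLam m t) = TmCLam (tsubst_cty k B m) (tsubst_tm k B t)"
| "tsubst_tm k B (TmCApp t g) = TmCApp (tsubst_tm k B t) (tsubst_co k B g)"
| "tsubst_tm k B (TmCast t g) = TmCast (tsubst_tm k B t) (tsubst_co k B g)"
| "tsubst_tm k B (TmRet t) = TmRet (tsubst_tm k B t)"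
| "tsubst_tm k B (TmHd A tr cls) =
     TmHd (tsubst_ty k B A) (tsubst_tm k B tr) (map (\<lambda>(nm, t). (nm, tsubst_tm k B t)) cls)"
| "tsubst_tm k B (TmLet t1 t2) = TmLet (tsubst_tm k B t1) (tsubst_tm k B t2)"
| "tsubst_tm k B (TmOp nm t1 A t2) = TmOp nm (tsubst_tm k B t1) (tsubst_ty k B A) (tsubst_tm k B t2)"
| "tsubst_tm k B (TmDo t1 t2) = TmDo (tsubst_tm k B t1) (tsubst_tm k B t2)"
| "tsubst_tm k B (TmWith t1 t2) = TmWith (tsubst_tm k B t1) (tsubst_tm k B t2)"

fun csubst_tm :: "nat \<Rightarrow> co \<Rightarrow> 'op tm \<Rightarrow> 'op tm" where
  "csubst_tm k e (TmVar n) = TmVar n"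
| "csubst_tm k e TmUnit = TmUnit"
| "csubst_tm k e (TmLam A t) = TmLam A (csubst_tm k e t)"
| "csubst_tm k e (TmApp t1 t2) = TmApp (csubst_tm k e t1) (csubst_tm k e t2)"
| "csubst_tm k e (TmTLam t) = TmTLam (csubst_tm k (shift_co_ty 1 0 e) t)"
| "csubst_tm k e (TmTApp t A) = TmTApp (csubst_tm k e t) A"
| "csubst_tm k e (TmCLam m t) = TmCLam m (csubst_tm (Suc k) (shift_co_co 1 0 e) t)"
| "csubst_tm k e (TmCApp t g) = TmCApp (csubst_tm k e t) (csubst_co k e g)"
| "csubst_tm k e (TmCast t g) = TmCast (csubst_tm k e t) (csubst_co k e g)"
| "csubst_tm k e (TmRet t) = TmRet (csubst_tm k e t)"
| "csubst_tm k e (TmHd A tr cls) =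
     TmHd A (csubst_tm k e tr) (map (\<lambda>(nm, t). (nm, csubst_tm k e t)) cls)"
| "csubst_tm k e (TmLet t1 t2) = TmLet (csubst_tm k e t1) (csubst_tm k e t2)"
| "csubst_tm k e (TmOp nm t1 A t2) = TmOp nm (csubst_tm k e t1) A (csubst_tm k e t2)"
| "csubst_tm k e (TmDo t1 t2) = TmDo (csubst_tm k e t1) (csubst_tm k e t2)"
| "csubst_tm k e (TmWith t1 t2) = TmWith (csubst_tm k e t1) (csubst_tm k e t2)"

section \<open>Contexts and well-formedness\<close>

fun ntv :: "ctx \<Rightarrow> nat" where
  "ntv [] = 0"
| "ntv (EType # G) = Suc (ntv G)"
| "ntv (_ # G) = ntv G"

text \<open>Type of term variable with index n (types of earlier entries are shifted past
later type-variable entries).\<close>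
fun lookup_tm :: "ctx \<Rightarrow> nat \<Rightarrow> ty option" where
  "lookup_tm [] n = None"
| "lookup_tm (EType # G) n = map_option (shift_ty 1 0) (lookup_tm G n)"
| "lookup_tm (ETerm A # G) n = (case n of 0 \<Rightarrow> Some A | Suc m \<Rightarrow> lookup_tm G m)"
| "lookup_tm (ECo m # G) n = lookup_tm G n"

fun lookup_co :: "ctx \<Rightarrow> nat \<Rightarrow> cty option" where
  "lookup_co [] n = None"
| "lookup_co (EType # G) n = map_option (shift_cty 1 0) (lookup_co G n)"
| "lookup_co (ETerm A # G) n = lookup_co G n"
| "lookup_co (ECo m # G) n = (case n of 0 \<Rightarrow> Some m | Suc k \<Rightarrow> lookup_co G k)"

fun wf_ty :: "ctx \<Rightarrow> ty \<Rightarrow> bool"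
and wf_cty :: "ctx \<Rightarrow> cty \<Rightarrow> bool" where
  "wf_ty G (TVar n) = (n < ntv G)"
| "wf_ty G TUnit = True"
| "wf_ty G (TFun A B) = (wf_ty G A \<and> wf_ty G B)"
| "wf_ty G (THand A B) = (wf_ty G A \<and> wf_ty G B)"
| "wf_ty G (TComp A) = wf_ty G A"
| "wf_ty G (TAll A) = wf_ty (EType # G) A"
| "wf_ty G (TCoArr m A) = (wf_cty G m \<and> wf_ty G A)"
| "wf_cty G (CLe A B) = (wf_ty G A \<and> wf_ty G B)"

section \<open>Coercion typing\<close>

inductive co_typing :: "ctx \<Rightarrow> co \<Rightarrow> cty \<Rightarrow> bool" where
  co_var: "lookup_co G n = Some m \<Longrightarrow> co_typing G (CVar n) m"
| co_unit: "co_typing G CReflUnit (CLe TUnit TUnit)"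
| co_tvar: "n < ntv G \<Longrightarrow> co_typing G (CReflVar n) (CLe (TVar n) (TVar n))"
| co_fun: "co_typing G g1 (CLe A2 A1) \<Longrightarrow> co_typing G g2 (CLe B1 B2) \<Longrightarrow>
    co_typing G (CFun g1 g2) (CLe (TFun A1 B1) (TFun A2 B2))"
| co_hand: "co_typing G g1 (CLe (TComp A2) (TComp A1)) \<Longrightarrow>
    co_typing G g2 (CLe (TComp B1) (TComp B2)) \<Longrightarrow>
    co_typing G (CHand g1 g2) (CLe (THand A1 B1) (THand A2 B2))"
| co_handToFun: "co_typing G g1 (CLe A2 A1) \<Longrightarrow> co_typing G g2 (CLe (TComp B1) B2) \<Longrightarrow>
    co_typing G (CHandToFun g1 g2) (CLe (THand A1 B1) (TFun A2 B2))"
| co_funToHand: "co_typing G g1 (CLe A2 A1) \<Longrightarrow> co_typing G g2 (CLe B1 (TComp B2)) \<Longrightarrow>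
    co_typing G (CFunToHand g1 g2) (CLe (TFun A1 B1) (THand A2 B2))"
| co_all: "co_typing (EType # G) g (CLe A B) \<Longrightarrow> co_typing G (CAll g) (CLe (TAll A) (TAll B))"
| co_coarr: "wf_cty G m \<Longrightarrow> co_typing G g (CLe A B) \<Longrightarrow>
    co_typing G (CCoArr m g) (CLe (TCoArr m A) (TCoArr m B))"
| co_comp: "co_typing G g (CLe A1 A2) \<Longrightarrow> co_typing G (CComp g) (CLe (TComp A1) (TComp A2))"
| co_return: "co_typing G g (CLe A1 A2) \<Longrightarrow> co_typing G (CReturn g) (CLe A1 (TComp A2))"
| co_unsafe: "co_typing G g (CLe A1 A2) \<Longrightarrow> co_typing G (CUnsafe g) (CLe (TComp A1) A2)"

section \<open>Term typing\<close>

text \<open>The signature is a function \<open>sig\<close> assigning to each operation the pair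
\<open>(A1, A2)\<close> of its argument and result types.\<close>

inductive typing :: "('op \<Rightarrow> ty \<times> ty) \<Rightarrow> ctx \<Rightarrow> 'op tm \<Rightarrow> ty \<Rightarrow> bool" for sig where
  t_var: "lookup_tm G n = Some A \<Longrightarrow> typing sig G (TmVar n) A"
| t_unit: "typing sig G TmUnit TUnit"
| t_lam: "wf_ty G A \<Longrightarrow> typing sig (ETerm A # G) t B \<Longrightarrow> typing sig G (TmLam A t) (TFun A B)"
| t_tlam: "typing sig (EType # G) t A \<Longrightarrow> typing sig G (TmTLam t) (TAll A)"
| t_tapp: "wf_ty G A \<Longrightarrow> typing sig G t (TAll B) \<Longrightarrow> typing sig G (TmTApp t A) (tsubst_ty 0 A B)"
| t_cast: "typing sig G t A \<Longrightarrow> co_typing G g (CLe A B) \<Longrightarrow> typing sig G (TmCast t g) B"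
| t_hand: "typing sig (ETerm A # G) tr (TComp B) \<Longrightarrow>
    distinct (map fst cls) \<Longrightarrow>
    (\<forall>(nm, t) \<in> set cls.
        typing sig (ETerm (TFun (snd (sig nm)) (TComp B)) # ETerm (fst (sig nm)) # G) t (TComp B)) \<Longrightarrow>
    typing sig G (TmHd A tr cls) (THand A B)"
| t_clam: "wf_cty G m \<Longrightarrow> typing sig (ECo m # G) t A \<Longrightarrow> typing sig G (TmCLam m t) (TCoArr m A)"
| t_capp: "typing sig G t (TCoArr m A) \<Longrightarrow> co_typing G g m \<Longrightarrow> typing sig G (TmCApp t g) A"
| t_app: "typing sig G t1 (TFun A B) \<Longrightarrow> typing sig G t2 A \<Longrightarrow> typing sig G (TmApp t1 t2) B"
| t_let: "typing sig G t1 A \<Longrightarrow> typing sig (ETerm A # G) t2 B \<Longrightarrow> typing sig G (TmLet t1 t2) B"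
| t_ret: "typing sig G t A \<Longrightarrow> typing sig G (TmRet t) (TComp A)"
| t_op: "sig nm = (A1, A2) \<Longrightarrow> typing sig G t1 A1 \<Longrightarrow> typing sig (ETerm A2 # G) t2 (TComp B) \<Longrightarrow>
    typing sig G (TmOp nm t1 A2 t2) (TComp B)"
| t_do: "typing sig G t1 (TComp A) \<Longrightarrow> typing sig (ETerm A # G) t2 (TComp B) \<Longrightarrow>
    typing sig G (TmDo t1 t2) (TComp B)"
| t_with: "typing sig G th (THand A B) \<Longrightarrow> typing sig G tc (TComp A) \<Longrightarrow>
    typing sig G (TmWith th tc) (TComp B)"

section \<open>Values and reduction\<close>

inductive val :: "'op tm \<Rightarrow> bool" where
  v_unit: "val TmUnit"
| v_hand: "val (TmHd A tr cls)"
| v_lam: "val (TmLam A t)"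
| v_tlam: "val (TmTLam t)"
| v_clam: "val (TmCLam m t)"
| v_cfun: "val v \<Longrightarrow> val (TmCast v (CFun g1 g2))"
| v_chand: "val v \<Longrightarrow> val (TmCast v (CHand g1 g2))"
| v_chandToFun: "val v \<Longrightarrow> val (TmCast v (CHandToFun g1 g2))"
| v_cfunToHand: "val v \<Longrightarrow> val (TmCast v (CFunToHand g1 g2))"
| v_call: "val v \<Longrightarrow> val (TmCast v (CAll g))"
| v_ccoarr: "val v \<Longrightarrow> val (TmCast v (CCoArr m g))"
| v_ret: "val v \<Longrightarrow> val (TmRet v)"
| v_op: "val v \<Longrightarrow> val (TmOp nm v A t)"

inductive step :: "'op tm \<Rightarrow> 'op tm \<Rightarrow> bool" where
  s_app1: "step t t' \<Longrightarrow> step (TmApp t t2) (TmApp t' t2)"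
| s_app2: "val v \<Longrightarrow> step t t' \<Longrightarrow> step (TmApp v t) (TmApp v t')"
| s_tapp: "step t t' \<Longrightarrow> step (TmTApp t A) (TmTApp t' A)"
| s_capp: "step t t' \<Longrightarrow> step (TmCApp t g) (TmCApp t' g)"
| s_let: "step t t' \<Longrightarrow> step (TmLet t t2) (TmLet t' t2)"
| s_ret: "step t t' \<Longrightarrow> step (TmRet t) (TmRet t')"
| s_op: "step t t' \<Longrightarrow> step (TmOp nm t B t2) (TmOp nm t' B t2)"
| s_do: "step t t' \<Longrightarrow> step (TmDo t t2) (TmDo t' t2)"
| s_with1: "step t t' \<Longrightarrow> step (TmWith t tc) (TmWith t' tc)"
| s_with2: "val vh \<Longrightarrow> step t t' \<Longrightarrow> step (TmWith vh t) (TmWith vh t')"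
| s_cast: "step t t' \<Longrightarrow> step (TmCast t g) (TmCast t' g)"
| s_beta: "val v \<Longrightarrow> step (TmApp (TmLam A t) v) (subst_tm 0 v t)"
| s_tbeta: "step (TmTApp (TmTLam t) A) (tsubst_tm 0 A t)"
| s_cbeta: "step (TmCApp (TmCLam m t) g) (csubst_tm 0 g t)"
| s_letv: "val v \<Longrightarrow> step (TmLet v t) (subst_tm 0 v t)"
| s_doret: "val v \<Longrightarrow> step (TmDo (TmRet v) t) (subst_tm 0 v t)"
| s_doop: "val v \<Longrightarrow>
    step (TmDo (TmOp nm v A t1) t2) (TmOp nm v A (TmDo t1 (shift_tm 1 1 t2)))"
| s_handret: "val v \<Longrightarrow> step (TmWith (TmHd A tr cls) (TmRet v)) (subst_tm 0 v tr)"
| s_handop: "val v \<Longrightarrow> map_of cls nm = Some tOp \<Longrightarrow>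
    step (TmWith (TmHd A tr cls) (TmOp nm v B t))
      (subst_tm 0 v (subst_tm 0 (shift_tm 1 0 (TmLam B (TmWith (shift_tm 1 0 (TmHd A tr cls)) t))) tOp))"
| s_handfwd: "val v \<Longrightarrow> map_of cls nm = None \<Longrightarrow>
    step (TmWith (TmHd A tr cls) (TmOp nm v B t))
      (TmOp nm v B (TmWith (shift_tm 1 0 (TmHd A tr cls)) t))"
| s_cunit: "val v \<Longrightarrow> step (TmCast v CReflUnit) v"
| s_ccomp_ret: "val v \<Longrightarrow> step (TmCast (TmRet v) (CComp g)) (TmRet (TmCast v g))"
| s_ccomp_op: "val v \<Longrightarrow>
    step (TmCast (TmOp nm v B t) (CComp g)) (TmOp nm v B (TmCast t (CComp g)))"
| s_creturn: "val v \<Longrightarrow> step (TmCast v (CReturn g)) (TmRet (TmCast v g))"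
| s_cunsafe: "val v \<Longrightarrow> step (TmCast (TmRet v) (CUnsafe g)) (TmCast v g)"
| s_cfun: "val v \<Longrightarrow> step (TmApp (TmCast v (CFun g1 g2)) t) (TmCast (TmApp v (TmCast t g1)) g2)"
| s_chand: "val v2 \<Longrightarrow> val v1 \<Longrightarrow>
    step (TmWith (TmCast v2 (CHand g1 g2)) v1) (TmCast (TmWith v2 (TmCast v1 g1)) g2)"
| s_chandToFun: "val v1 \<Longrightarrow> val v2 \<Longrightarrow>
    step (TmApp (TmCast v1 (CHandToFun g1 g2)) v2)
      (TmCast (TmWith v1 (TmRet (TmCast v2 g1))) g2)"
| s_cfunToHand_op: "val v2 \<Longrightarrow> val v1 \<Longrightarrow>
    step (TmWith (TmCast v2 (CFunToHand g1 g2)) (TmOp nm v1 B t))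
      (TmOp nm v1 B (TmWith (shift_tm 1 0 (TmCast v2 (CFunToHand g1 g2))) t))"
| s_cfunToHand_ret: "val v2 \<Longrightarrow> val v1 \<Longrightarrow>
    step (TmWith (TmCast v2 (CFunToHand g1 g2)) (TmRet v1))
      (TmCast (TmApp v2 (TmCast v1 g1)) g2)"
| s_call: "val v \<Longrightarrow> step (TmTApp (TmCast v (CAll g)) A) (TmCast (TmTApp v A) (tsubst_co 0 A g))"
| s_ccoarr: "val v \<Longrightarrow> step (TmCApp (TmCast v (CCoArr m g1)) g2) (TmCast (TmCApp v g2) g1)"

end

theory Submission
  imports Defs
begin

text \<open>Typing is stable under weakening and under substitution for each of the three sorts of
variables (term, type, coercion), at any depth of the context; each reduction is then checked by
inverting the typing derivation of its redex. The delicate point is the handler: its operation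
clauses are typed with the signature types unshifted, so weakening by a type variable and type
substitution need those types to be closed, which is where the hypothesis on the signature
enters.\<close>

section \<open>Type indices\<close>

fun wf_ty_at :: "nat \<Rightarrow> ty \<Rightarrow> bool"
and wf_cty_at :: "nat \<Rightarrow> cty \<Rightarrow> bool" where
  "wf_ty_at n (TVar k) = (k < n)"
| "wf_ty_at n TUnit = True"
| "wf_ty_at n (TFun A B) = (wf_ty_at n A \<and> wf_ty_at n B)"
| "wf_ty_at n (THand A B) = (wf_ty_at n A \<and> wf_ty_at n B)"
| "wf_ty_at n (TComp A) = wf_ty_at n A"
| "wf_ty_at n (TAll A) = wf_ty_at (Suc n) A"
| "wf_ty_at n (TCoArr m A) = (wf_cty_at n m \<and> wf_ty_at n A)"
| "wf_cty_at n (CLe A B) = (wf_ty_at n A \<and> wf_ty_at n B)"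

lemma wf_ty_iff_wf_ty_at[simp]:
  "wf_ty G A \<longleftrightarrow> wf_ty_at (ntv G) A"
  "wf_cty G m \<longleftrightarrow> wf_cty_at (ntv G) m"
  by (induction A and m arbitrary: G and G) auto

lemma wf_ty_at_mono:
  "wf_ty_at n A \<Longrightarrow> n \<le> n' \<Longrightarrow> wf_ty_at n' A"
  "wf_cty_at n m \<Longrightarrow> n \<le> n' \<Longrightarrow> wf_cty_at n' m"
  by (induction A and m arbitrary: n n' and n n') auto

lemma wf_ty_at_shift:
  "wf_ty_at n A \<Longrightarrow> wf_ty_at (d + n) (shift_ty d c A)"
  "wf_cty_at n m \<Longrightarrow> wf_cty_at (d + n) (shift_cty d c m)"
proof (induction A and m arbitrary: n c and n c)
  case (TAll A)
  then show ?case using TAll.IH[of "Suc n" "Suc c"] by simp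
qed auto

lemma wf_ty_at_tsubst:
  "wf_ty_at (Suc n) A \<Longrightarrow> k \<le> n \<Longrightarrow> wf_ty_at n B \<Longrightarrow> wf_ty_at n (tsubst_ty k B A)"
  "wf_cty_at (Suc n) m \<Longrightarrow> k \<le> n \<Longrightarrow> wf_ty_at n B \<Longrightarrow> wf_cty_at n (tsubst_cty k B m)"
proof (induction A and m arbitrary: n k B and n k B)
  case (TAll A)
  then show ?case using wf_ty_at_shift(1)[of n B 1 0] by simp
qed auto

lemma shift_ty_0[simp]: "shift_ty 0 c A = A" "shift_cty 0 c m = m"
  by (induction A and m arbitrary: c and c) auto

lemma shift_ty_add:
  "shift_ty a c (shift_ty b c A) = shift_ty (a + b) c A"
  "shift_cty a c (shift_cty b c m) = shift_cty (a + b) c m"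
  by (induction A and m arbitrary: c and c) auto

lemma shift_ty_comm:
  "c' \<le> c \<Longrightarrow> shift_ty d c' (shift_ty e c A) = shift_ty e (c + d) (shift_ty d c' A)"
  "c' \<le> c \<Longrightarrow> shift_cty d c' (shift_cty e c m) = shift_cty e (c + d) (shift_cty d c' m)"
  by (induction A and m arbitrary: c c' and c c') auto

lemma shift_ty_wf_ty_at:
  "wf_ty_at n A \<Longrightarrow> n \<le> c \<Longrightarrow> shift_ty d c A = A"
  "wf_cty_at n m \<Longrightarrow> n \<le> c \<Longrightarrow> shift_cty d c m = m"
  by (induction A and m arbitrary: n c and n c) auto

lemma tsubst_ty_wf_ty_at:
  "wf_ty_at n A \<Longrightarrow> n \<le> k \<Longrightarrow> tsubst_ty k B A = A"
  "wf_cty_at n m \<Longrightarrow> n \<le> k \<Longrightarrow> tsubst_cty k B m = m"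
  by (induction A and m arbitrary: n k B and n k B) auto

text \<open>Stated with \<open>Suc 0\<close>, the simp normal form of \<open>1\<close>.\<close>

lemma tsubst_shift_ty_cancel[simp]:
  "tsubst_ty k B (shift_ty (Suc 0) k A) = A"
  "tsubst_cty k B (shift_cty (Suc 0) k m) = m"
  by (induction A and m arbitrary: k B and k B) auto

lemma shift_tsubst_ty_above:
  "k \<le> c \<Longrightarrow> shift_ty d c (tsubst_ty k B A) = tsubst_ty k (shift_ty d c B) (shift_ty d (Suc c) A)"
  "k \<le> c \<Longrightarrow> shift_cty d c (tsubst_cty k B m) = tsubst_cty k (shift_ty d c B) (shift_cty d (Suc c) m)"
proof (induction A and m arbitrary: k c B and k c B)
  case (TAll A)
  then show ?case using shift_ty_comm(1)[of 0 c 1 d B] by simp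
qed auto

lemma shift_tsubst_ty_below:
  "c \<le> k \<Longrightarrow> shift_ty d c (tsubst_ty k B A) = tsubst_ty (k + d) (shift_ty d c B) (shift_ty d c A)"
  "c \<le> k \<Longrightarrow> shift_cty d c (tsubst_cty k B m) = tsubst_cty (k + d) (shift_ty d c B) (shift_cty d c m)"
proof (induction A and m arbitrary: k c B and k c B)
  case (TAll A)
  then show ?case using shift_ty_comm(1)[of 0 c 1 d B] by simp
qed auto

lemma tsubst_ty_tsubst_ty:
  "j \<le> k \<Longrightarrow> tsubst_ty k B (tsubst_ty j A C) =
     tsubst_ty j (tsubst_ty k B A) (tsubst_ty (Suc k) (shift_ty 1 j B) C)"
  "j \<le> k \<Longrightarrow> tsubst_cty k B (tsubst_cty j A m) =
     tsubst_cty j (tsubst_ty k B A) (tsubst_cty (Suc k) (shift_ty 1 j B) m)"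
proof (induction C and m arbitrary: j k A B and j k A B)
  case (TAll C)
  then show ?case using shift_tsubst_ty_below(1)[of 0 k 1 B A] shift_ty_comm(1)[of 0 j 1 1 B] by simp
qed auto

section \<open>Context operations\<close>

fun ntm :: "ctx \<Rightarrow> nat" where
  "ntm [] = 0"
| "ntm (ETerm A # G) = Suc (ntm G)"
| "ntm (_ # G) = ntm G"

fun nco :: "ctx \<Rightarrow> nat" where
  "nco [] = 0"
| "nco (ECo m # G) = Suc (nco G)"
| "nco (_ # G) = nco G"

text \<open>The types in an entry refer to the type variables of the context below it, hence the
cutoff \<open>ntv G\<close>.\<close>

fun shift_ctx :: "ctx \<Rightarrow> ctx" where
  "shift_ctx [] = []"
| "shift_ctx (EType # G) = EType # shift_ctx G"
| "shift_ctx (ETerm A # G) = ETerm (shift_ty 1 (ntv G) A) # shift_ctx G"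
| "shift_ctx (ECo m # G) = ECo (shift_cty 1 (ntv G) m) # shift_ctx G"

fun tsubst_ctx :: "ty \<Rightarrow> ctx \<Rightarrow> ctx" where
  "tsubst_ctx B [] = []"
| "tsubst_ctx B (EType # G) = EType # tsubst_ctx B G"
| "tsubst_ctx B (ETerm A # G) = ETerm (tsubst_ty (ntv G) (shift_ty (ntv G) 0 B) A) # tsubst_ctx B G"
| "tsubst_ctx B (ECo m # G) = ECo (tsubst_cty (ntv G) (shift_ty (ntv G) 0 B) m) # tsubst_ctx B G"

lemma ntv_append[simp]: "ntv (D @ G) = ntv D + ntv G"
  by (induction D rule: ntv.induct) auto

lemma ntv_shift_ctx[simp]: "ntv (shift_ctx D) = ntv D"
  by (induction D rule: shift_ctx.induct) auto

lemma ntv_tsubst_ctx[simp]: "ntv (tsubst_ctx B D) = ntv D"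
  by (induction D rule: tsubst_ctx.induct) auto

lemma ntv_term_entries: "set T \<subseteq> range ETerm \<Longrightarrow> ntv T = 0"
  by (induction T) auto

lemma lookup_tm_shift_ctx:
  "lookup_tm (shift_ctx D @ EType # G) n = map_option (shift_ty 1 (ntv D)) (lookup_tm (D @ G) n)"
proof (induction D arbitrary: n rule: shift_ctx.induct)
  case (2 D)
  then show ?case
    by (auto simp: option.map_comp o_def shift_ty_comm(1)[of 0 "ntv D" 1 1, simplified])
qed (auto split: nat.split)

lemma lookup_co_shift_ctx:
  "lookup_co (shift_ctx D @ EType # G) n = map_option (shift_cty 1 (ntv D)) (lookup_co (D @ G) n)"
proof (induction D arbitrary: n rule: shift_ctx.induct)
  case (2 D)
  then show ?case
    by (auto simp: option.map_comp o_def shift_ty_comm(2)[of 0 "ntv D" 1 1, simplified])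
qed (auto split: nat.split)

lemma lookup_tm_tsubst_ctx:
  "lookup_tm (tsubst_ctx B D @ G) n =
   map_option (tsubst_ty (ntv D) (shift_ty (ntv D) 0 B)) (lookup_tm (D @ EType # G) n)"
proof (induction D arbitrary: n)
  case Nil
  then show ?case by (simp add: option.map_comp o_def option.map_ident)
next
  case (Cons e D)
  then show ?case
    by (cases e) (auto simp: option.map_comp o_def shift_tsubst_ty_below(1)[of 0 _ 1, simplified]
        shift_ty_add split: nat.split)
qed

lemma lookup_co_tsubst_ctx:
  "lookup_co (tsubst_ctx B D @ G) n =
   map_option (tsubst_cty (ntv D) (shift_ty (ntv D) 0 B)) (lookup_co (D @ EType # G) n)"
proof (induction D arbitrary: n)
  case Nil
  then show ?case by (simp add: option.map_comp o_def option.map_ident)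
next
  case (Cons e D)
  then show ?case
    by (cases e) (auto simp: option.map_comp o_def shift_tsubst_ty_below(2)[of 0 _ 1, simplified]
        shift_ty_add split: nat.split)
qed

lemma lookup_tm_insert_terms_below:
  "n < ntm D \<Longrightarrow> lookup_tm (D @ T @ G) n = lookup_tm (D @ G) n"
  by (induction D arbitrary: n rule: ntm.induct) (auto split: nat.split)

lemma lookup_tm_insert_terms_above:
  "set T \<subseteq> range ETerm \<Longrightarrow> ntm D \<le> n \<Longrightarrow>
   lookup_tm (D @ T @ G) (n + length T) = lookup_tm (D @ G) n"
proof (induction D arbitrary: n rule: ntm.induct)
  case 1
  then show ?case by (induction T) auto
qed (auto split: nat.split)

lemma lookup_co_insert_terms:
  "set T \<subseteq> range ETerm \<Longrightarrow> lookup_co (D @ T @ G) n = lookup_co (D @ G) n"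
proof (induction D arbitrary: n rule: nco.induct)
  case 1
  then show ?case by (induction T) auto
qed (auto split: nat.split)

lemma lookup_tm_insert_co: "lookup_tm (D @ ECo m # G) n = lookup_tm (D @ G) n"
  by (induction D arbitrary: n rule: ntm.induct) (auto split: nat.split)

lemma lookup_co_insert_co_below:
  "n < nco D \<Longrightarrow> lookup_co (D @ ECo m # G) n = lookup_co (D @ G) n"
  by (induction D arbitrary: n rule: nco.induct) (auto split: nat.split)

lemma lookup_co_insert_co_above:
  "nco D \<le> n \<Longrightarrow> lookup_co (D @ ECo m # G) (Suc n) = lookup_co (D @ G) n"
  by (induction D arbitrary: n rule: nco.induct) (auto split: nat.split)

section \<open>Coercion typing under changes of context\<close>

lemma co_typing_ctx_cong:
  "co_typing G g m \<Longrightarrow> ntv G' = ntv G \<Longrightarrow> lookup_co G' = lookup_co G \<Longrightarrow> co_typing G' g m"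
proof (induction arbitrary: G' rule: co_typing.induct)
  case (co_all G g A B)
  then show ?case using co_all.IH[of "EType # G'"] by (auto intro!: co_typing.co_all simp: fun_eq_iff)
qed (auto intro: co_typing.intros)

lemma co_typing_insert_terms_iff:
  "set T \<subseteq> range ETerm \<Longrightarrow> co_typing (D @ T @ G) g m \<longleftrightarrow> co_typing (D @ G) g m"
  by (auto elim: co_typing_ctx_cong simp: ntv_term_entries lookup_co_insert_terms fun_eq_iff)

lemma co_typing_insert_term_iff[simp]: "co_typing (D @ ETerm A # G) g m \<longleftrightarrow> co_typing (D @ G) g m"
  using co_typing_insert_terms_iff[of "[ETerm A]"] by simp

lemma co_typing_Cons_ETerm_iff[simp]: "co_typing (ETerm A # G) g m \<longleftrightarrow> co_typing G g m"
  using co_typing_insert_term_iff[of "[]"] by simp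

lemma co_typing_refl_co: "wf_ty_at (ntv G) A \<Longrightarrow> co_typing G (refl_co A) (CLe A A)"
  by (induction A arbitrary: G rule: refl_co.induct) (auto intro!: co_typing.intros)

lemma co_typing_weaken_ty:
  assumes "co_typing (D @ G) g m"
  shows "co_typing (shift_ctx D @ EType # G) (shift_co_ty 1 (ntv D) g) (shift_cty 1 (ntv D) m)"
  using assms
proof (induction "D @ G" g m arbitrary: D rule: co_typing.induct)
  case (co_all g A B)
  then show ?case using co_all.hyps(2)[of "EType # D"] by (auto intro!: co_typing.co_all)
qed (auto intro!: co_typing.intros simp: lookup_co_shift_ctx wf_ty_at_shift(2)[where d = 1, simplified])

corollary co_typing_weaken_ty1:
  "co_typing G g m \<Longrightarrow> co_typing (EType # G) (shift_co_ty 1 0 g) (shift_cty 1 0 m)"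
  using co_typing_weaken_ty[of "[]"] by simp

lemma co_typing_weaken_co:
  assumes "co_typing (D @ G) g m"
  shows "co_typing (D @ ECo m' # G) (shift_co_co 1 (nco D) g) m"
  using assms
proof (induction "D @ G" g m arbitrary: D rule: co_typing.induct)
  case (co_all g A B)
  then show ?case using co_all.hyps(2)[of "EType # D"] by (auto intro!: co_typing.co_all)
qed (auto intro!: co_typing.intros simp: lookup_co_insert_co_below lookup_co_insert_co_above)

corollary co_typing_weaken_co1: "co_typing G g m \<Longrightarrow> co_typing (ECo m' # G) (shift_co_co 1 0 g) m"
  using co_typing_weaken_co[of "[]"] by simp

lemma co_typing_tsubst:
  assumes "co_typing (D @ EType # G) g m" and "wf_ty_at (ntv G) B"
  shows "co_typing (tsubst_ctx B D @ G) (tsubst_co (ntv D) (shift_ty (ntv D) 0 B) g)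
           (tsubst_cty (ntv D) (shift_ty (ntv D) 0 B) m)"
  using assms
proof (induction "D @ EType # G" g m arbitrary: D rule: co_typing.induct)
  case (co_tvar n)
  then show ?case
    using wf_ty_at_shift(1)[OF co_tvar.prems, of "ntv D" 0]
    by (auto intro!: co_typing.intros co_typing_refl_co)
next
  case (co_all g A B')
  then show ?case
    using co_all.hyps(2)[of "EType # D"] by (auto intro!: co_typing.co_all simp: shift_ty_add)
next
  case (co_coarr m g A B')
  then show ?case
    using wf_ty_at_tsubst(2)[of "ntv D + ntv G" m "ntv D" "shift_ty (ntv D) 0 B"]
      wf_ty_at_shift(1)[OF co_coarr.prems, of "ntv D" 0]
    by (auto intro!: co_typing.co_coarr)
qed (auto intro!: co_typing.intros simp: lookup_co_tsubst_ctx)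

lemma less_eq_Suc_cases:
  fixes n k :: nat
  obtains "n < k" | "n = k" | j where "n = Suc j" "k \<le> j"
  using not0_implies_Suc by fastforce

lemma co_typing_csubst:
  assumes "co_typing (D @ ECo m # G) g m'" and "co_typing (D @ G) e me"
    and "lookup_co (D @ ECo m # G) (nco D) = Some me"
  shows "co_typing (D @ G) (csubst_co (nco D) e g) m'"
  using assms
proof (induction "D @ ECo m # G" g m' arbitrary: D e me rule: co_typing.induct)
  case (co_var n m')
  then show ?case
    by (cases n "nco D" rule: less_eq_Suc_cases)
      (auto intro!: co_typing.co_var simp: lookup_co_insert_co_below lookup_co_insert_co_above)
next
  case (co_all g A B)
  then show ?case
    using co_all.hyps(2)[of "EType # D" "shift_co_ty 1 0 e" "shift_cty 1 0 me"]
      co_typing_weaken_ty1[OF co_all.prems(1)]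
    by (auto intro!: co_typing.co_all)
qed (auto intro!: co_typing.intros)

section \<open>Term typing under changes of context\<close>

definition closed_sig :: "('op \<Rightarrow> ty \<times> ty) \<Rightarrow> bool" where
  "closed_sig sig \<longleftrightarrow> (\<forall>nm. wf_ty [] (fst (sig nm)) \<and> wf_ty [] (snd (sig nm)))"

lemma closed_sig_types:
  assumes "closed_sig sig" and "sig nm = (A1, A2)"
  shows "wf_ty G A1" "wf_ty G A2"
    "shift_ty d c A1 = A1" "shift_ty d c A2 = A2"
    "tsubst_ty k B A1 = A1" "tsubst_ty k B A2 = A2"
proof -
  have "wf_ty_at 0 A1" "wf_ty_at 0 A2"
    using assms unfolding closed_sig_def by (metis fst_conv snd_conv ntv.simps(1) wf_ty_iff_wf_ty_at(1))+
  then show "wf_ty G A1" "wf_ty G A2"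
    "shift_ty d c A1 = A1" "shift_ty d c A2 = A2"
    "tsubst_ty k B A1 = A1" "tsubst_ty k B A2 = A2"
    by (auto intro: wf_ty_at_mono shift_ty_wf_ty_at tsubst_ty_wf_ty_at)
qed

lemma typing_TmHd_map:
  assumes "typing sig (ETerm A # G) tr (TComp B)" and "distinct (map fst cls)"
    and "\<And>nm t. (nm, t) \<in> set cls \<Longrightarrow>
       typing sig (ETerm (TFun (snd (sig nm)) (TComp B)) # ETerm (fst (sig nm)) # G) (f t) (TComp B)"
  shows "typing sig G (TmHd A tr (map (\<lambda>(nm, t). (nm, f t)) cls)) (THand A B)"
proof (rule typing.t_hand)
  show "distinct (map fst (map (\<lambda>(nm, t). (nm, f t)) cls))"
    using assms(2) by (simp add: comp_def case_prod_beta)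
qed (use assms in auto)

lemma typing_weaken_terms:
  assumes "typing sig (D @ G) t A" and T: "set T \<subseteq> range ETerm"
  shows "typing sig (D @ T @ G) (shift_tm (length T) (ntm D) t) A"
  using assms(1)
proof (induction "D @ G" t A arbitrary: D rule: typing.induct)
  case (t_var n A)
  then show ?case
    using T by (auto intro!: typing.t_var simp: lookup_tm_insert_terms_below lookup_tm_insert_terms_above)
next
  case (t_lam A t B)
  then show ?case using T t_lam.hyps(3)[of "ETerm A # D"] by (auto intro!: typing.t_lam simp: ntv_term_entries)
next
  case (t_tlam t A)
  then show ?case using t_tlam.hyps(2)[of "EType # D"] by (auto intro!: typing.t_tlam)
next
  case (t_hand A tr B cls)
  have "typing sig (ETerm (TFun (snd (sig nm)) (TComp B)) # ETerm (fst (sig nm)) # D @ T @ G)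
          (shift_tm (length T) (ntm D + 2) t) (TComp B)" if "(nm, t) \<in> set cls" for nm t
    using t_hand.hyps(4) that
    by (force simp: numeral_2_eq_2
        dest!: spec[of _ "ETerm (TFun (snd (sig nm)) (TComp B)) # ETerm (fst (sig nm)) # D"])
  then show ?case
    using t_hand.hyps(2)[of "ETerm A # D"] t_hand.hyps(3) by (auto intro!: typing_TmHd_map)
next
  case (t_clam m t A)
  then show ?case using T t_clam.hyps(3)[of "ECo m # D"] by (auto intro!: typing.t_clam simp: ntv_term_entries)
next
  case (t_let t1 A t2 B)
  then show ?case using t_let.hyps(4)[of "ETerm A # D"] by (auto intro!: typing.t_let)
next
  case (t_op nm A1 A2 t1 t2 B)
  then show ?case using t_op.hyps(5)[of "ETerm A2 # D"] by (auto intro!: typing.t_op)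
next
  case (t_do t1 A t2 B)
  then show ?case using t_do.hyps(4)[of "ETerm A # D"] by (auto intro!: typing.t_do)
qed (use T in \<open>auto intro!: typing.intros simp: ntv_term_entries co_typing_insert_terms_iff\<close>)

corollary typing_weaken_term1: "typing sig G t A \<Longrightarrow> typing sig (ETerm B # G) (shift_tm 1 0 t) A"
  using typing_weaken_terms[of sig "[]" G t A "[ETerm B]"] by simp

lemma typing_weaken_ty:
  assumes "typing sig (D @ G) t A" and sig: "closed_sig sig"
  shows "typing sig (shift_ctx D @ EType # G) (shift_tm_ty 1 (ntv D) t) (shift_ty 1 (ntv D) A)"
  using assms(1)
proof (induction "D @ G" t A arbitrary: D rule: typing.induct)
  case (t_lam A t B)
  then show ?case
    using t_lam.hyps(3)[of "ETerm A # D"]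
    by (auto intro!: typing.t_lam wf_ty_at_shift(1)[where d = 1, simplified])
next
  case (t_tlam t A)
  then show ?case using t_tlam.hyps(2)[of "EType # D"] by (auto intro!: typing.t_tlam)
next
  case (t_cast t A g B)
  then show ?case using co_typing_weaken_ty[OF t_cast.hyps(3)] by (auto intro!: typing.t_cast)
next
  case (t_tapp A t B)
  then show ?case
    by (auto intro!: typing.t_tapp wf_ty_at_shift(1)[where d = 1, simplified]
        simp: shift_tsubst_ty_above(1)[of 0])
next
  case (t_hand A tr B cls)
  let ?B = "shift_ty 1 (ntv D) B"
  have "typing sig (ETerm (TFun (snd (sig nm)) (TComp ?B)) # ETerm (fst (sig nm)) # shift_ctx D @ EType # G)
          (shift_tm_ty 1 (ntv D) t) (TComp ?B)" if "(nm, t) \<in> set cls" for nm t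
    using t_hand.hyps(4) that
    by (fastforce simp: closed_sig_types[OF sig surjective_pairing]
        dest: spec[of _ "ETerm (TFun (snd (sig nm)) (TComp B)) # ETerm (fst (sig nm)) # D"])
  then show ?case
    using t_hand.hyps(2)[of "ETerm A # D"] t_hand.hyps(3) by (auto intro!: typing_TmHd_map)
next
  case (t_clam m t A)
  then show ?case
    using t_clam.hyps(3)[of "ECo m # D"]
    by (auto intro!: typing.t_clam wf_ty_at_shift(2)[where d = 1, simplified])
next
  case (t_let t1 A t2 B)
  then show ?case using t_let.hyps(4)[of "ETerm A # D"] by (auto intro!: typing.t_let)
next
  case (t_op nm A1 A2 t1 t2 B)
  then show ?case
    using t_op.hyps(5)[of "ETerm A2 # D"] closed_sig_types[OF sig t_op.hyps(1)]
    by (auto intro!: typing.t_op)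
next
  case (t_do t1 A t2 B)
  then show ?case using t_do.hyps(4)[of "ETerm A # D"] by (auto intro!: typing.t_do)
qed (auto intro!: typing.intros co_typing_weaken_ty[simplified] simp: lookup_tm_shift_ctx)

corollary typing_weaken_ty1:
  "typing sig G t A \<Longrightarrow> closed_sig sig \<Longrightarrow> typing sig (EType # G) (shift_tm_ty 1 0 t) (shift_ty 1 0 A)"
  using typing_weaken_ty[of sig "[]"] by simp

lemma typing_weaken_co:
  assumes "typing sig (D @ G) t A"
  shows "typing sig (D @ ECo m' # G) (shift_tm_co 1 (nco D) t) A"
  using assms
proof (induction "D @ G" t A arbitrary: D rule: typing.induct)
  case (t_lam A t B)
  then show ?case using t_lam.hyps(3)[of "ETerm A # D"] by (auto intro!: typing.t_lam)
next
  case (t_tlam t A)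
  then show ?case using t_tlam.hyps(2)[of "EType # D"] by (auto intro!: typing.t_tlam)
next
  case (t_hand A tr B cls)
  have "typing sig (ETerm (TFun (snd (sig nm)) (TComp B)) # ETerm (fst (sig nm)) # D @ ECo m' # G)
          (shift_tm_co 1 (nco D) t) (TComp B)" if "(nm, t) \<in> set cls" for nm t
    using t_hand.hyps(4) that
    by (fastforce dest: spec[of _ "ETerm (TFun (snd (sig nm)) (TComp B)) # ETerm (fst (sig nm)) # D"])
  then show ?case
    using t_hand.hyps(2)[of "ETerm A # D"] t_hand.hyps(3) by (auto intro!: typing_TmHd_map)
next
  case (t_clam m t A)
  then show ?case using t_clam.hyps(3)[of "ECo m # D"] by (auto intro!: typing.t_clam)
next
  case (t_let t1 A t2 B)
  then show ?case using t_let.hyps(4)[of "ETerm A # D"] by (auto intro!: typing.t_let)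
next
  case (t_op nm A1 A2 t1 t2 B)
  then show ?case using t_op.hyps(5)[of "ETerm A2 # D"] by (auto intro!: typing.t_op)
next
  case (t_do t1 A t2 B)
  then show ?case using t_do.hyps(4)[of "ETerm A # D"] by (auto intro!: typing.t_do)
qed (auto intro!: typing.intros co_typing_weaken_co[simplified] simp: lookup_tm_insert_co)

corollary typing_weaken_co1: "typing sig G t A \<Longrightarrow> typing sig (ECo m # G) (shift_tm_co 1 0 t) A"
  using typing_weaken_co[of sig "[]"] by simp

text \<open>The type \<open>Bv\<close> of the substituted variable is \<open>B\<close> shifted past the type binders of \<open>D\<close>.\<close>

lemma typing_subst:
  assumes "typing sig (D @ ETerm B # G) t A" and sig: "closed_sig sig"
    and "typing sig (D @ G) v Bv" and "lookup_tm (D @ ETerm B # G) (ntm D) = Some Bv"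
  shows "typing sig (D @ G) (subst_tm (ntm D) v t) A"
  using assms(1,3,4)
proof (induction "D @ ETerm B # G" t A arbitrary: D v Bv rule: typing.induct)
  case (t_var n A)
  have below: "n < ntm D \<Longrightarrow> lookup_tm (D @ ETerm B # G) n = lookup_tm (D @ G) n"
    using lookup_tm_insert_terms_below[of n D "[ETerm B]"] by simp
  have above: "ntm D \<le> k \<Longrightarrow> lookup_tm (D @ ETerm B # G) (Suc k) = lookup_tm (D @ G) k" for k
    using lookup_tm_insert_terms_above[of "[ETerm B]" D k G] by simp
  show ?case
    by (cases n "ntm D" rule: less_eq_Suc_cases) (use t_var below above in \<open>auto intro!: typing.t_var\<close>)
next
  case (t_lam A t B')
  then show ?case
    using t_lam.hyps(3)[of "ETerm A # D" "shift_tm 1 0 v" Bv] typing_weaken_term1[OF t_lam.prems(1)]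
    by (auto intro!: typing.t_lam)
next
  case (t_tlam t A)
  then show ?case
    using t_tlam.hyps(2)[of "EType # D" "shift_tm_ty 1 0 v" "shift_ty 1 0 Bv"]
      typing_weaken_ty1[OF t_tlam.prems(1) sig]
    by (auto intro!: typing.t_tlam)
next
  case (t_hand A tr B' cls)
  have "typing sig (ETerm (TFun (snd (sig nm)) (TComp B')) # ETerm (fst (sig nm)) # D @ G)
          (subst_tm (ntm D + 2) (shift_tm 2 0 v) t) (TComp B')" if "(nm, t) \<in> set cls" for nm t
    using t_hand.hyps(4) that
      typing_weaken_terms[of sig "[]" "D @ G" v Bv
        "[ETerm (TFun (snd (sig nm)) (TComp B')), ETerm (fst (sig nm))]"]
      t_hand.prems
    by (fastforce simp: numeral_2_eq_2
        dest: spec[of _ "ETerm (TFun (snd (sig nm)) (TComp B')) # ETerm (fst (sig nm)) # D"])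
  then show ?case
    using t_hand.hyps(2)[of "ETerm A # D" "shift_tm 1 0 v" Bv] t_hand.hyps(3) t_hand.prems
      typing_weaken_term1[OF t_hand.prems(1)]
    by (auto intro!: typing_TmHd_map)
next
  case (t_clam m t A)
  then show ?case
    using t_clam.hyps(3)[of "ECo m # D" "shift_tm_co 1 0 v" Bv] typing_weaken_co1[OF t_clam.prems(1)]
    by (auto intro!: typing.t_clam)
next
  case (t_let t1 A t2 B')
  then show ?case
    using t_let.hyps(4)[of "ETerm A # D" "shift_tm 1 0 v" Bv] typing_weaken_term1[OF t_let.prems(1)]
    by (auto intro!: typing.t_let)
next
  case (t_op nm A1 A2 t1 t2 B')
  then show ?case
    using t_op.hyps(5)[of "ETerm A2 # D" "shift_tm 1 0 v" Bv] typing_weaken_term1[OF t_op.prems(1)]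
    by (auto intro!: typing.t_op)
next
  case (t_do t1 A t2 B')
  then show ?case
    using t_do.hyps(4)[of "ETerm A # D" "shift_tm 1 0 v" Bv] typing_weaken_term1[OF t_do.prems(1)]
    by (auto intro!: typing.t_do)
qed (auto intro!: typing.intros)

corollary typing_subst0:
  "typing sig (ETerm B # G) t A \<Longrightarrow> closed_sig sig \<Longrightarrow> typing sig G v B \<Longrightarrow>
   typing sig G (subst_tm 0 v t) A"
  using typing_subst[of sig "[]" B G t A v B] by simp

lemma typing_tsubst:
  assumes "typing sig (D @ EType # G) t A" and sig: "closed_sig sig" and U: "wf_ty_at (ntv G) U"
  shows "typing sig (tsubst_ctx U D @ G) (tsubst_tm (ntv D) (shift_ty (ntv D) 0 U) t)
           (tsubst_ty (ntv D) (shift_ty (ntv D) 0 U) A)"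
  using assms(1)
proof (induction "D @ EType # G" t A arbitrary: D rule: typing.induct)
  case (t_lam A t B)
  then show ?case
    using t_lam.hyps(3)[of "ETerm A # D"] wf_ty_at_shift(1)[OF U, of "ntv D" 0]
    by (auto intro!: typing.t_lam wf_ty_at_tsubst(1))
next
  case (t_tlam t A)
  then show ?case using t_tlam.hyps(2)[of "EType # D"] by (auto intro!: typing.t_tlam simp: shift_ty_add)
next
  case (t_tapp A t B)
  then show ?case
    using wf_ty_at_shift(1)[OF U, of "ntv D" 0]
      tsubst_ty_tsubst_ty(1)[of 0 "ntv D" "shift_ty (ntv D) 0 U" A B]
    by (auto intro!: typing.t_tapp wf_ty_at_tsubst(1))
next
  case (t_cast t A g B)
  then show ?case using co_typing_tsubst[OF t_cast.hyps(3) U] by (auto intro!: typing.t_cast)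
next
  case (t_hand A tr B cls)
  let ?U = "shift_ty (ntv D) 0 U"
  let ?B = "tsubst_ty (ntv D) ?U B"
  have "typing sig (ETerm (TFun (snd (sig nm)) (TComp ?B)) # ETerm (fst (sig nm)) # tsubst_ctx U D @ G)
          (tsubst_tm (ntv D) ?U t) (TComp ?B)" if "(nm, t) \<in> set cls" for nm t
    using t_hand.hyps(4) that
    by (fastforce simp: closed_sig_types[OF sig surjective_pairing]
        dest: spec[of _ "ETerm (TFun (snd (sig nm)) (TComp B)) # ETerm (fst (sig nm)) # D"])
  then show ?case
    using t_hand.hyps(2)[of "ETerm A # D"] t_hand.hyps(3) by (auto intro!: typing_TmHd_map)
next
  case (t_clam m t A)
  then show ?case
    using t_clam.hyps(3)[of "ECo m # D"] wf_ty_at_shift(1)[OF U, of "ntv D" 0]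
    by (auto intro!: typing.t_clam wf_ty_at_tsubst(2))
next
  case (t_capp t m A g)
  then show ?case using co_typing_tsubst[OF t_capp.hyps(3) U] by (auto intro!: typing.t_capp)
next
  case (t_let t1 A t2 B)
  then show ?case using t_let.hyps(4)[of "ETerm A # D"] by (auto intro!: typing.t_let)
next
  case (t_op nm A1 A2 t1 t2 B)
  then show ?case
    using t_op.hyps(5)[of "ETerm A2 # D"] closed_sig_types[OF sig t_op.hyps(1)]
    by (auto intro!: typing.t_op)
next
  case (t_do t1 A t2 B)
  then show ?case using t_do.hyps(4)[of "ETerm A # D"] by (auto intro!: typing.t_do)
qed (auto intro!: typing.intros simp: lookup_tm_tsubst_ctx)

lemma typing_csubst:
  assumes "typing sig (D @ ECo m # G) t A" and "co_typing (D @ G) e me"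
    and "lookup_co (D @ ECo m # G) (nco D) = Some me"
  shows "typing sig (D @ G) (csubst_tm (nco D) e t) A"
  using assms
proof (induction "D @ ECo m # G" t A arbitrary: D e me rule: typing.induct)
  case (t_lam A t B)
  then show ?case using t_lam.hyps(3)[of "ETerm A # D" e me] by (auto intro!: typing.t_lam)
next
  case (t_tlam t A)
  then show ?case
    using t_tlam.hyps(2)[of "EType # D" "shift_co_ty 1 0 e" "shift_cty 1 0 me"]
      co_typing_weaken_ty1[OF t_tlam.prems(1)]
    by (auto intro!: typing.t_tlam)
next
  case (t_cast t A g B)
  then show ?case using co_typing_csubst[OF t_cast.hyps(3)] by (auto intro!: typing.t_cast)
next
  case (t_hand A tr B cls)
  have "typing sig (ETerm (TFun (snd (sig nm)) (TComp B)) # ETerm (fst (sig nm)) # D @ G)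
          (csubst_tm (nco D) e t) (TComp B)" if "(nm, t) \<in> set cls" for nm t
    using t_hand.hyps(4) that t_hand.prems
    by (fastforce dest: spec[of _ "ETerm (TFun (snd (sig nm)) (TComp B)) # ETerm (fst (sig nm)) # D"])
  then show ?case
    using t_hand.hyps(2)[of "ETerm A # D" e me] t_hand.hyps(3) t_hand.prems
    by (auto intro!: typing_TmHd_map)
next
  case (t_clam m' t A)
  then show ?case
    using t_clam.hyps(3)[of "ECo m' # D" "shift_co_co 1 0 e" me] co_typing_weaken_co1[OF t_clam.prems(1)]
    by (auto intro!: typing.t_clam)
next
  case (t_capp t m' A g)
  then show ?case using co_typing_csubst[OF t_capp.hyps(3)] by (auto intro!: typing.t_capp)
next
  case (t_let t1 A t2 B)
  then show ?case using t_let.hyps(4)[of "ETerm A # D" e me] by (auto intro!: typing.t_let)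
next
  case (t_op nm A1 A2 t1 t2 B)
  then show ?case using t_op.hyps(5)[of "ETerm A2 # D" e me] by (auto intro!: typing.t_op)
next
  case (t_do t1 A t2 B)
  then show ?case using t_do.hyps(4)[of "ETerm A # D" e me] by (auto intro!: typing.t_do)
qed (auto intro!: typing.intros simp: lookup_tm_insert_co)

section \<open>Preservation\<close>

inductive_cases typing_TmAppE: "typing sig G (TmApp t1 t2) A"
inductive_cases typing_TmTAppE: "typing sig G (TmTApp t B) A"
inductive_cases typing_TmCAppE: "typing sig G (TmCApp t g) A"
inductive_cases typing_TmLetE: "typing sig G (TmLet t1 t2) A"
inductive_cases typing_TmRetE: "typing sig G (TmRet t) A"
inductive_cases typing_TmOpE: "typing sig G (TmOp nm t1 B t2) A"
inductive_cases typing_TmDoE: "typing sig G (TmDo t1 t2) A"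
inductive_cases typing_TmWithE: "typing sig G (TmWith t1 t2) A"
inductive_cases typing_TmCastE: "typing sig G (TmCast t g) A"
inductive_cases typing_TmLamE: "typing sig G (TmLam B t) A"
inductive_cases typing_TmTLamE: "typing sig G (TmTLam t) A"
inductive_cases typing_TmCLamE: "typing sig G (TmCLam m t) A"
inductive_cases typing_TmHdE: "typing sig G (TmHd B tr cls) A"

inductive_cases co_typing_CReflUnitE: "co_typing G CReflUnit m"
inductive_cases co_typing_CFunE: "co_typing G (CFun g1 g2) m"
inductive_cases co_typing_CHandE: "co_typing G (CHand g1 g2) m"
inductive_cases co_typing_CHandToFunE: "co_typing G (CHandToFun g1 g2) m"
inductive_cases co_typing_CFunToHandE: "co_typing G (CFunToHand g1 g2) m"
inductive_cases co_typing_CAllE: "co_typing G (CAll g) m"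
inductive_cases co_typing_CCoArrE: "co_typing G (CCoArr m0 g) m"
inductive_cases co_typing_CCompE: "co_typing G (CComp g) m"
inductive_cases co_typing_CReturnE: "co_typing G (CReturn g) m"
inductive_cases co_typing_CUnsafeE: "co_typing G (CUnsafe g) m"

lemma typing_do_op:
  assumes "typing sig G (TmDo (TmOp nm v B t1) t2) A"
  shows "typing sig G (TmOp nm v B (TmDo t1 (shift_tm 1 1 t2))) A"
proof -
  from assms obtain A0 C A1 where "A = TComp C" "sig nm = (A1, B)" "typing sig G v A1"
    "typing sig (ETerm B # G) t1 (TComp A0)" and t2: "typing sig (ETerm A0 # G) t2 (TComp C)"
    by (auto elim!: typing_TmDoE typing_TmOpE)
  moreover have "typing sig (ETerm A0 # ETerm B # G) (shift_tm 1 1 t2) (TComp C)"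
    using typing_weaken_terms[of sig "[ETerm A0]" G t2 _ "[ETerm B]"] t2 by simp
  ultimately show ?thesis by (auto intro!: typing.intros)
qed

lemma typing_with_op_forward:
  assumes "typing sig G (TmWith h (TmOp nm v B t)) A"
  shows "typing sig G (TmOp nm v B (TmWith (shift_tm 1 0 h) t)) A"
proof -
  from assms obtain C A0 A1 where "A = TComp C" and op: "sig nm = (A1, B)" and v: "typing sig G v A1"
    and h: "typing sig G h (THand A0 C)" and t: "typing sig (ETerm B # G) t (TComp A0)"
    by (auto elim!: typing_TmWithE typing_TmOpE)
  show ?thesis
    unfolding \<open>A = TComp C\<close> by (rule typing.t_op[OF op v typing.t_with[OF typing_weaken_term1[OF h] t]])
qed

lemma typing_with_op_handled:
  assumes "typing sig G (TmWith (TmHd A' tr cls) (TmOp nm v B t)) A" and sig: "closed_sig sig"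
    and "map_of cls nm = Some tOp"
  shows "typing sig G
    (subst_tm 0 v (subst_tm 0 (shift_tm 1 0 (TmLam B (TmWith (shift_tm 1 0 (TmHd A' tr cls)) t))) tOp)) A"
proof -
  from assms(1) obtain C A1 where h: "typing sig G (TmHd A' tr cls) (THand A' C)" and "A = TComp C"
    and op: "sig nm = (A1, B)" and v: "typing sig G v A1" and t: "typing sig (ETerm B # G) t (TComp A')"
    by (auto elim!: typing_TmWithE typing_TmOpE elim: typing_TmHdE)
  from h have clause: "typing sig (ETerm (TFun B (TComp C)) # ETerm A1 # G) tOp (TComp C)"
    using assms(3) op by (auto elim!: typing_TmHdE dest!: map_of_SomeD)
  have k: "typing sig G (TmLam B (TmWith (shift_tm 1 0 (TmHd A' tr cls)) t)) (TFun B (TComp C))"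
    using closed_sig_types(2)[OF sig op] typing_weaken_term1[OF h] t by (auto intro!: typing.intros)
  show ?thesis
    unfolding \<open>A = TComp C\<close>
    by (rule typing_subst0[OF typing_subst0[OF clause sig typing_weaken_term1[OF k]] sig v])
qed

lemma step_preserves_typing:
  "step t t' \<Longrightarrow> closed_sig sig \<Longrightarrow> typing sig G t A \<Longrightarrow> typing sig G t' A"
proof (induction arbitrary: A rule: step.induct)
  case (s_tbeta t A')
  then show ?case
    using typing_tsubst[of sig "[]" G t _ A'] by (auto elim!: typing_TmTAppE typing_TmTLamE)
next
  case (s_cbeta m t g)
  then show ?case
    using typing_csubst[of sig "[]" m G t A g m] by (auto elim!: typing_TmCAppE typing_TmCLamE)
next
  case (s_doop v nm B t1 t2)
  show ?case by (rule typing_do_op[OF s_doop.prems(2)])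
next
  case (s_handop v cls nm tOp A' tr B t)
  show ?case by (rule typing_with_op_handled[OF s_handop.prems(2,1) s_handop.hyps(2)])
next
  case (s_handfwd v cls nm A' tr B t)
  show ?case by (rule typing_with_op_forward[OF s_handfwd.prems(2)])
next
  case (s_cfunToHand_op v2 v1 g1 g2 nm B t)
  show ?case by (rule typing_with_op_forward[OF s_cfunToHand_op.prems(2)])
next
  case (s_call v g A')
  from s_call.prems(2) obtain A1 B1 where
    "typing sig G v (TAll A1)" "co_typing (EType # G) g (CLe A1 B1)" "wf_ty G A'"
    "A = tsubst_ty 0 A' B1"
    by (auto elim!: typing_TmTAppE typing_TmCastE co_typing_CAllE)
  then show ?case
    using co_typing_tsubst[of "[]" G g "CLe A1 B1" A'] by (auto intro!: typing.intros)
qed (auto elim!: typing_TmAppE typing_TmTAppE typing_TmCAppE typing_TmLetE typing_TmRetE typing_TmOpE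
      typing_TmDoE typing_TmWithE typing_TmCastE typing_TmLamE typing_TmHdE
      co_typing_CReflUnitE co_typing_CFunE co_typing_CHandE co_typing_CHandToFunE
      co_typing_CFunToHandE co_typing_CCoArrE co_typing_CCompE co_typing_CReturnE co_typing_CUnsafeE
    intro!: typing.intros co_typing.intros intro: typing_subst0)

theorem theorem7p1:
  fixes sig :: "'op \<Rightarrow> ty \<times> ty" and G :: ctx and t t' :: "'op tm" and A :: ty
  assumes "\<forall>nm. wf_ty [] (fst (sig nm)) \<and> wf_ty [] (snd (sig nm))"
    and "typing sig G t A"
    and "step t t'"
  shows "typing sig G t' A"
  using step_preserves_typing[OF assms(3)] assms(1,2) unfolding closed_sig_def by blast

end
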